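(* For a positive integer $m$, consider the two-stage adjustable problem with $n=m$, $\mathbf c=\mathbf 0$, $\mathbf d=\mathbf e$, $\mathbf A=\mathbf 0$, the matrix $\mathbf B\in\mathbb R_+^{m\times m}$ with $B_{ii}=1$ and $B_{ij}=\frac1{\sqrt m}$ for $i\ne j$, and uncertainty set $$\mathcal U=\operatorname{conv}\left(\mathbf 0,\mathbf e_1,\dots,\mathbf e_m,\boldsymbol\nu_1,\dots,\boldsymbol\nu_m\right),\qquad \boldsymbol\nu_i=\tfrac{1}{\sqrt m}(\mathbf e-\mathbf e_i),\ i\in[m].$$ Then $z_{\sf Aff}(\mathbf B)=\Omega(\sqrt m)\cdot z_{\sf AR}(\mathbf B)$, i.e. there are absolute constants $C>0$ and $m_0$ such that $z_{\sf Aff}(\mathbf B)\ge C\sqrt m\,z_{\sf AR}(\mathbf B)$ for all $m\ge m_0$.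
   Context: For data $\mathbf A,\mathbf B\in\mathbb R_+^{m\times n}$, $\mathbf c,\mathbf d\in\mathbb R_+^n$ and a compact convex set $\mathcal U\subseteq\mathbb R^m_+$, the two-stage adjustable robust problem is $$z_{\sf AR}(\mathbf B)=\min_{\mathbf x\in\mathbb R^n_+}\ \mathbf c^T\mathbf x+\max_{\mathbf h\in\mathcal U}\ \min_{\mathbf y(\mathbf h)\in\mathbb R^n_+:\ \mathbf A\mathbf x+\mathbf B\mathbf y(\mathbf h)\ge \mathbf h}\ \mathbf d^T\mathbf y(\mathbf h).$$ The affine policy problem $z_{\sf Aff}(\mathbf B)$ is the same problem with the second-stage decision restricted to $\mathbf y(\mathbf h)=\mathbf P\mathbf h+\mathbf q$ for some $\mathbf P\in\mathbb R^{n\times m}$, $\mathbf q\in\mathbb R^n$: it is the minimum over $\mathbf x\in\mathbb R^n_+,\mathbf P,\mathbf q$ of $\mathbf c^T\mathbf x+\max_{\mathbf h\in\mathcal U}\mathbf d^T(\mathbf P\mathbf h+\mathbf q)$ subject to $\mathbf A\mathbf x+\mathbf B(\mathbf P\mathbf h+\mathbf q)\ge\mathbf h$ and $\mathbf P\mathbf h+\mathbf q\ge\mathbf 0$ for all $\mathbf h\in\mathcal U$. $\mathbf e$ is the all-ones vector and $\mathbf e_i$ the $i$-th standard basis vector of $\mathbb R^m$. *)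

theory Defs
  imports "HOL-Analysis.Analysis"
begin

text \<open>Vectors in R^k are represented as functions nat => real, only the
coordinates 0..k-1 being relevant; matrices as nat => nat => real
(row index first).  Optimal values are taken in ereal, so that an infeasible
minimisation gives +infinity.\<close>

definition mat_vec :: "nat \<Rightarrow> (nat \<Rightarrow> nat \<Rightarrow> real) \<Rightarrow> (nat \<Rightarrow> real) \<Rightarrow> nat \<Rightarrow> real" where
  "mat_vec n M v = (\<lambda>i. \<Sum>j<n. M i j * v j)"

definition dotp :: "nat \<Rightarrow> (nat \<Rightarrow> real) \<Rightarrow> (nat \<Rightarrow> real) \<Rightarrow> real" where
  "dotp n u v = (\<Sum>j<n. u j * v j)"

definition nonneg_vec :: "nat \<Rightarrow> (nat \<Rightarrow> real) \<Rightarrow> bool" where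
  "nonneg_vec n v \<longleftrightarrow> (\<forall>j<n. 0 \<le> v j)"

definition conv_pts :: "(nat \<Rightarrow> real) set \<Rightarrow> (nat \<Rightarrow> real) set" where
  "conv_pts V = {h. \<exists>w. (\<forall>v\<in>V. 0 \<le> w v) \<and> sum w V = 1 \<and> (\<forall>i. h i = (\<Sum>v\<in>V. w v * v i))}"

definition second_stage :: "nat \<Rightarrow> nat \<Rightarrow> (nat \<Rightarrow> nat \<Rightarrow> real) \<Rightarrow> (nat \<Rightarrow> nat \<Rightarrow> real)
    \<Rightarrow> (nat \<Rightarrow> real) \<Rightarrow> (nat \<Rightarrow> real) \<Rightarrow> (nat \<Rightarrow> real) \<Rightarrow> ereal" where
  "second_stage m n A B d x h =
     (INF y\<in>{y. nonneg_vec n y \<and> (\<forall>i<m. mat_vec n A x i + mat_vec n B y i \<ge> h i)}.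
        ereal (dotp n d y))"

definition z_AR :: "nat \<Rightarrow> nat \<Rightarrow> (nat \<Rightarrow> nat \<Rightarrow> real) \<Rightarrow> (nat \<Rightarrow> nat \<Rightarrow> real)
    \<Rightarrow> (nat \<Rightarrow> real) \<Rightarrow> (nat \<Rightarrow> real) \<Rightarrow> (nat \<Rightarrow> real) set \<Rightarrow> ereal" where
  "z_AR m n A B c d U =
     (INF x\<in>{x. nonneg_vec n x}.
        ereal (dotp n c x) + (SUP h\<in>U. second_stage m n A B d x h))"

definition z_Aff :: "nat \<Rightarrow> nat \<Rightarrow> (nat \<Rightarrow> nat \<Rightarrow> real) \<Rightarrow> (nat \<Rightarrow> nat \<Rightarrow> real)
    \<Rightarrow> (nat \<Rightarrow> real) \<Rightarrow> (nat \<Rightarrow> real) \<Rightarrow> (nat \<Rightarrow> real) set \<Rightarrow> ereal" where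
  "z_Aff m n A B c d U =
     (INF (x, P, q)\<in>{(x, P, q). nonneg_vec n x \<and>
          (\<forall>h\<in>U. (\<forall>i<m. mat_vec n A x i + mat_vec n B (\<lambda>j. mat_vec m P h j + q j) i \<ge> h i)
                 \<and> nonneg_vec n (\<lambda>j. mat_vec m P h j + q j))}.
        ereal (dotp n c x) + (SUP h\<in>U. ereal (dotp n d (\<lambda>j. mat_vec m P h j + q j))))"

definition unit_vec :: "nat \<Rightarrow> nat \<Rightarrow> real" where
  "unit_vec i = (\<lambda>j. if j = i then 1 else 0)"

definition nu_vec :: "nat \<Rightarrow> nat \<Rightarrow> nat \<Rightarrow> real" where
  "nu_vec m i = (\<lambda>j. if j < m \<and> j \<noteq> i then 1 / sqrt (real m) else 0)"

definition U_inst :: "nat \<Rightarrow> (nat \<Rightarrow> real) set" where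
  "U_inst m = conv_pts ({\<lambda>_. 0} \<union> unit_vec ` {..<m} \<union> nu_vec m ` {..<m})"

definition B_inst :: "nat \<Rightarrow> nat \<Rightarrow> nat \<Rightarrow> real" where
  "B_inst m = (\<lambda>i j. if i = j then 1 else 1 / sqrt (real m))"

end

theory Submission
  imports Defs
begin

text \<open>Routing every vertex of \<open>U\<close> through some \<open>y = e\<^sub>k\<close> costs at most 1, and mixing these
  routes convexly shows \<open>z_AR \<le> 1\<close>.  For an affine policy \<open>y(h) = P h + q\<close> put \<open>r = \<surd>m\<close>,
  let \<open>Tot\<close> be the sum of all entries of \<open>P\<close>, \<open>T\<close> its trace and \<open>s = \<Sum> q\<close>.  Coverage of the
  unit vectors, summed over the coordinates, and nonnegativity of \<open>y(\<nu>\<^sub>i)\<^sub>i\<close>, summed over \<open>i\<close>,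
  eliminate \<open>T\<close> and force \<open>r Tot + (2m - 1) s \<ge> m r\<close>.  The costs of the policy at
  \<open>\<nu>\<^sub>1, \<dots>, \<nu>\<^sub>m\<close> together with \<open>m\<close> times its cost at \<open>0\<close> add up to
  \<open>(m - 1) Tot / r + 2 m s \<ge> (m - 1) r\<close>, so one of these points costs at least \<open>\<surd>m / 4\<close>.\<close>

lemma mat_vec_zero_matrix: "mat_vec n (\<lambda>_ _. 0) x = (\<lambda>_. 0)"
  by (simp add: mat_vec_def)

lemma mat_vec_zero_vec: "mat_vec n M (\<lambda>_. 0) = (\<lambda>_. 0)"
  by (simp add: mat_vec_def)

lemma unit_vec_apply: "unit_vec k j = (if j = k then 1 else 0)"
  by (simp add: unit_vec_def)

lemma mat_vec_unit_vec: "k < n \<Longrightarrow> mat_vec n M (unit_vec k) i = M i k"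
  by (simp add: mat_vec_def unit_vec_def if_distrib cong: if_cong)

lemma subset_conv_pts:
  assumes "finite V"
  shows "V \<subseteq> conv_pts V"
proof
  fix p assume "p \<in> V"
  have "(\<Sum>v\<in>V. (if v = p then 1 else 0) * v i) = (\<Sum>v\<in>V. if v = p then p i else 0)" for i
    by (rule sum.cong) auto
  then show "p \<in> conv_pts V"
    unfolding conv_pts_def using assms \<open>p \<in> V\<close>
    by (intro CollectI exI[of _ "\<lambda>v. if v = p then 1 else 0"]) auto
qed

lemma second_stage_conv_pts_le:
  assumes "finite V"
    and vertex: "\<And>v. v \<in> V \<Longrightarrow> \<exists>y. nonneg_vec n y \<and> dotp n d y \<le> c \<and>
                        (\<forall>i<m. v i \<le> mat_vec n A x i + mat_vec n B y i)"
    and "h \<in> conv_pts V"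
  shows "second_stage m n A B d x h \<le> ereal c"
proof -
  obtain w where w_nonneg: "\<forall>v\<in>V. 0 \<le> w v" and w_sum: "sum w V = 1"
    and h: "\<And>i. h i = (\<Sum>v\<in>V. w v * v i)"
    using \<open>h \<in> conv_pts V\<close> unfolding conv_pts_def by blast
  obtain g where g: "\<And>v. v \<in> V \<Longrightarrow> nonneg_vec n (g v) \<and> dotp n d (g v) \<le> c \<and>
                        (\<forall>i<m. v i \<le> mat_vec n A x i + mat_vec n B (g v) i)"
    using vertex by metis
  define Y where "Y k = (\<Sum>v\<in>V. w v * g v k)" for k
  have "nonneg_vec n Y"
    using g w_nonneg by (auto simp: nonneg_vec_def Y_def intro!: sum_nonneg)
  moreover have "h i \<le> mat_vec n A x i + mat_vec n B Y i" if "i < m" for i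
  proof -
    have "h i \<le> (\<Sum>v\<in>V. w v * (mat_vec n A x i + mat_vec n B (g v) i))"
      unfolding h using g w_nonneg that by (intro sum_mono mult_left_mono) auto
    also have "\<dots> = mat_vec n A x i * sum w V + (\<Sum>v\<in>V. w v * mat_vec n B (g v) i)"
      by (simp add: distrib_left sum.distrib sum_distrib_right[symmetric] mult.commute)
    also have "\<dots> = mat_vec n A x i + mat_vec n B Y i"
      using w_sum unfolding mat_vec_def Y_def
      by (simp add: sum_distrib_left sum.swap[of _ V] algebra_simps)
    finally show ?thesis .
  qed
  ultimately have "second_stage m n A B d x h \<le> ereal (dotp n d Y)"
    unfolding second_stage_def by (intro INF_lower) simp
  also have "dotp n d Y = (\<Sum>v\<in>V. w v * dotp n d (g v))"
    unfolding dotp_def Y_def by (simp add: sum_distrib_left sum.swap[of _ V] algebra_simps)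
  also have "\<dots> \<le> (\<Sum>v\<in>V. w v * c)"
    using g w_nonneg by (intro sum_mono mult_left_mono) auto
  finally show ?thesis
    using w_sum by (simp add: sum_distrib_right[symmetric])
qed

lemma mat_vec_nu_vec:
  "i < m \<Longrightarrow> mat_vec m P (nu_vec m i) j = ((\<Sum>l<m. P j l) - P j i) / sqrt (real m)"
proof -
  assume "i < m"
  have "mat_vec m P (nu_vec m i) j =
      (\<Sum>l<m. P j l / sqrt m - (if l = i then P j l / sqrt m else 0))"
    unfolding mat_vec_def nu_vec_def by (rule sum.cong) auto
  also have "\<dots> = (\<Sum>l<m. P j l) / sqrt m - P j i / sqrt m"
    using \<open>i < m\<close> by (simp add: sum_subtractf sum_divide_distrib)
  finally show ?thesis by (simp add: diff_divide_distrib)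
qed

lemma mat_vec_B_inst:
  "j < m \<Longrightarrow> mat_vec m (B_inst m) v j = v j + ((\<Sum>k<m. v k) - v j) / sqrt (real m)"
proof -
  assume "j < m"
  have "mat_vec m (B_inst m) v j =
      (\<Sum>k<m. v k / sqrt m + (if k = j then v k - v k / sqrt m else 0))"
    unfolding mat_vec_def B_inst_def by (rule sum.cong) auto
  also have "\<dots> = (\<Sum>k<m. v k) / sqrt m + (v j - v j / sqrt m)"
    using \<open>j < m\<close> by (simp add: sum.distrib sum_divide_distrib)
  finally show ?thesis by (simp add: diff_divide_distrib)
qed

definition inst_vertices :: "nat \<Rightarrow> (nat \<Rightarrow> real) set" where
  "inst_vertices m = {\<lambda>_. 0} \<union> unit_vec ` {..<m} \<union> nu_vec m ` {..<m}"

lemma finite_inst_vertices: "finite (inst_vertices m)"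
  by (simp add: inst_vertices_def)

lemma U_inst_eq: "U_inst m = conv_pts (inst_vertices m)"
  by (simp add: U_inst_def inst_vertices_def)

lemma inst_vertices_subset_U_inst: "inst_vertices m \<subseteq> U_inst m"
  unfolding U_inst_eq using finite_inst_vertices by (rule subset_conv_pts)

lemma zero_in_U_inst: "(\<lambda>_. 0) \<in> U_inst m"
  using inst_vertices_subset_U_inst by (auto simp: inst_vertices_def)

lemma unit_vec_in_U_inst: "k < m \<Longrightarrow> unit_vec k \<in> U_inst m"
  using inst_vertices_subset_U_inst by (auto simp: inst_vertices_def)

lemma nu_vec_in_U_inst: "k < m \<Longrightarrow> nu_vec m k \<in> U_inst m"
  using inst_vertices_subset_U_inst by (auto simp: inst_vertices_def)

lemma inst_vertex_covered_at_unit_cost: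
  assumes "v \<in> inst_vertices m"
  shows "\<exists>y. nonneg_vec m y \<and> dotp m (\<lambda>_. 1) y \<le> 1 \<and>
             (\<forall>i<m. v i \<le> mat_vec m (\<lambda>_ _. 0) x i + mat_vec m (B_inst m) y i)"
proof -
  consider "v = (\<lambda>_. 0)" | k where "k < m" "v = unit_vec k" | k where "k < m" "v = nu_vec m k"
    using assms unfolding inst_vertices_def by blast
  then show ?thesis
  proof cases
    case 1
    then show ?thesis
      by (intro exI[of _ "\<lambda>_. 0"]) (simp add: nonneg_vec_def dotp_def mat_vec_def)
  next
    case (2 k)
    then show ?thesis
      by (intro exI[of _ "unit_vec k"])
        (auto simp: nonneg_vec_def dotp_def mat_vec_zero_matrix mat_vec_unit_vec
          unit_vec_apply B_inst_def)
  next
    case (3 k)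
    then show ?thesis
      by (intro exI[of _ "unit_vec k"])
        (auto simp: nonneg_vec_def dotp_def mat_vec_zero_matrix mat_vec_unit_vec
          unit_vec_apply B_inst_def nu_vec_def)
  qed
qed

lemma z_AR_inst_le_one:
  "z_AR m m (\<lambda>_ _. 0) (B_inst m) (\<lambda>_. 0) (\<lambda>_. 1) (U_inst m) \<le> 1"
  unfolding z_AR_def
proof (rule INF_lower2[of "\<lambda>_. 0"])
  show "(\<lambda>_. 0) \<in> {x. nonneg_vec m x}"
    by (simp add: nonneg_vec_def)
  have "(SUP h\<in>U_inst m. second_stage m m (\<lambda>_ _. 0) (B_inst m) (\<lambda>_. 1) (\<lambda>_. 0) h) \<le> 1"
    unfolding U_inst_eq
    using second_stage_conv_pts_le[OF finite_inst_vertices inst_vertex_covered_at_unit_cost]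
    by (simp add: SUP_least one_ereal_def)
  then show "ereal (dotp m (\<lambda>_. 0) (\<lambda>_. 0)) +
      (SUP h\<in>U_inst m. second_stage m m (\<lambda>_ _. 0) (B_inst m) (\<lambda>_. 1) (\<lambda>_. 0) h) \<le> 1"
    by (simp add: dotp_def)
qed

lemma affine_cost_inequality:
  fixes r s T Tot :: real
  assumes "r \<ge> 1" "s \<ge> 0" "T \<le> Tot + r * s"
    and "T + s + (Tot + r\<^sup>2 * s - T - s) / r \<ge> r\<^sup>2"
  shows "(r\<^sup>2 - 1) * Tot / r + 2 * r\<^sup>2 * s \<ge> (r\<^sup>2 - 1) * r"
proof -
  have "r > 0" "r\<^sup>2 \<ge> 1"
    using assms(1) by (auto simp: one_le_power)
  have cover: "(r - 1) * T + Tot + (r\<^sup>2 + r - 1) * s \<ge> r ^ 3"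
    using assms(4) \<open>r > 0\<close> by (simp add: field_simps power2_eq_square power3_eq_cube)
  have "(r - 1) * T \<le> (r - 1) * (Tot + r * s)"
    using assms(1,3) by (simp add: mult_left_mono)
  then have mass: "r * Tot + (2 * r\<^sup>2 - 1) * s \<ge> r ^ 3"
    using cover by (simp add: algebra_simps power2_eq_square power3_eq_cube)
  have "(r\<^sup>2 - 1) * (r * Tot + (2 * r\<^sup>2 - 1) * s) \<ge> (r\<^sup>2 - 1) * r ^ 3"
    using mass \<open>r\<^sup>2 \<ge> 1\<close> by (intro mult_left_mono) auto
  moreover have "(3 * r\<^sup>2 - 1) * s \<ge> 0"
    using \<open>r\<^sup>2 \<ge> 1\<close> assms(2) by simp
  ultimately have "r * ((r\<^sup>2 - 1) * Tot / r + 2 * r\<^sup>2 * s) \<ge> r * ((r\<^sup>2 - 1) * r)"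
    using \<open>r > 0\<close> by (simp add: field_simps power2_eq_square power3_eq_cube)
  then show ?thesis
    using \<open>r > 0\<close> by simp
qed

lemma affine_policy_inst_cost_sum:
  fixes m :: nat and P :: "nat \<Rightarrow> nat \<Rightarrow> real" and q :: "nat \<Rightarrow> real"
  defines "y h \<equiv> \<lambda>j. mat_vec m P h j + q j"
  assumes "m \<ge> 1"
    and q_nonneg: "\<And>j. j < m \<Longrightarrow> 0 \<le> q j"
    and nu_nonneg: "\<And>i. i < m \<Longrightarrow> 0 \<le> y (nu_vec m i) i"
    and covers: "\<And>j. j < m \<Longrightarrow> 1 \<le> mat_vec m (B_inst m) (y (unit_vec j)) j"
  shows "(\<Sum>i<m. \<Sum>j<m. y (nu_vec m i) j) + m * (\<Sum>j<m. q j) \<ge> (real m - 1) * sqrt m"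
proof -
  define r where "r = sqrt m"
  define s where "s = (\<Sum>j<m. q j)"
  define T where "T = (\<Sum>i<m. P i i)"
  define Tot where "Tot = (\<Sum>i<m. \<Sum>l<m. P i l)"
  have r: "r \<ge> 1" "r\<^sup>2 = m"
    using \<open>m \<ge> 1\<close> by (auto simp: r_def)
  have y_nu: "y (nu_vec m i) j = ((\<Sum>l<m. P j l) - P j i) / r + q j" if "i < m" for i j
    using that by (simp add: y_def mat_vec_nu_vec r_def)
  have "0 \<le> (\<Sum>i<m. y (nu_vec m i) i)"
    using nu_nonneg by (intro sum_nonneg) simp
  also have "\<dots> = (Tot - T) / r + s"
    by (simp add: y_nu Tot_def T_def s_def sum.distrib sum_subtractf sum_divide_distrib[symmetric])
  finally have trace: "T \<le> Tot + r * s"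
    using r by (simp add: field_simps)
  have "real m \<le> (\<Sum>j<m. mat_vec m (B_inst m) (y (unit_vec j)) j)"
    using sum_mono[of "{..<m}" "\<lambda>_. 1", OF covers] by simp
  also have "\<dots> = T + s + (Tot + r\<^sup>2 * s - T - s) / r"
    by (simp add: mat_vec_B_inst y_def mat_vec_unit_vec r Tot_def T_def s_def r_def[symmetric]
        sum.distrib sum_subtractf sum_divide_distrib[symmetric] sum.swap[of "\<lambda>k j. P k j"])
  finally have cover: "T + s + (Tot + r\<^sup>2 * s - T - s) / r \<ge> r\<^sup>2"
    using r by simp
  have "(\<Sum>i<m. \<Sum>j<m. y (nu_vec m i) j) = (r\<^sup>2 - 1) * Tot / r + r\<^sup>2 * s"
    by (simp add: y_nu r Tot_def s_def sum.distrib sum_subtractf sum_divide_distrib[symmetric]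
        sum.swap[of "\<lambda>i j. P j i"] algebra_simps)
  moreover have "s \<ge> 0"
    unfolding s_def using q_nonneg by (intro sum_nonneg) simp
  ultimately show ?thesis
    using affine_cost_inequality[OF r(1) _ trace cover]
    by (simp add: r s_def[symmetric] r_def[symmetric] mult.commute)
qed

lemma z_Aff_inst_ge:
  assumes "m \<ge> 2"
  shows "ereal (sqrt m / 4) \<le> z_Aff m m (\<lambda>_ _. 0) (B_inst m) (\<lambda>_. 0) (\<lambda>_. 1) (U_inst m)"
  unfolding z_Aff_def
proof (rule INF_greatest, clarify)
  fix x P q
  define y where "y h = (\<lambda>j. mat_vec m P h j + q j)" for h
  define cost where "cost h = (\<Sum>j<m. y h j)" for h
  assume "nonneg_vec m x" and "\<forall>h\<in>U_inst m.
      (\<forall>i<m. h i \<le> mat_vec m (\<lambda>_ _. 0) x i + mat_vec m (B_inst m) (\<lambda>j. mat_vec m P h j + q j) i)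
      \<and> nonneg_vec m (\<lambda>j. mat_vec m P h j + q j)"
  then have feasible: "\<And>h i. h \<in> U_inst m \<Longrightarrow> i < m \<Longrightarrow>
      h i \<le> mat_vec m (B_inst m) (y h) i \<and> 0 \<le> y h i"
    by (simp add: y_def nonneg_vec_def mat_vec_zero_matrix)
  have y_zero: "y (\<lambda>_. 0) = q"
    by (simp add: y_def mat_vec_zero_vec)
  define K where "K = (real m - 1) * sqrt m / m"
  have q_nonneg: "0 \<le> q j" if "j < m" for j
    using feasible[OF zero_in_U_inst that] by (simp add: y_zero)
  have nu_nonneg: "0 \<le> y (nu_vec m i) i" if "i < m" for i
    using feasible[OF nu_vec_in_U_inst[OF that] that] by simp
  have covers: "1 \<le> mat_vec m (B_inst m) (y (unit_vec j)) j" if "j < m" for j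
    using feasible[OF unit_vec_in_U_inst[OF that] that] by (simp add: unit_vec_apply)
  have "(real m - 1) * sqrt m \<le> (\<Sum>i<m. cost (nu_vec m i)) + m * cost (\<lambda>_. 0)"
    using affine_policy_inst_cost_sum[where m = m and P = P and q = q] assms q_nonneg nu_nonneg covers
    by (simp add: cost_def y_def mat_vec_zero_vec)
  then have "(\<Sum>i<m. cost (nu_vec m i) + cost (\<lambda>_. 0)) \<ge> (real m - 1) * sqrt m"
    by (simp add: sum.distrib)
  then obtain i where i: "i < m" and "cost (nu_vec m i) + cost (\<lambda>_. 0) \<ge> K"
    using sum_bounded_above_strict[of "{..<m}" "\<lambda>i. cost (nu_vec m i) + cost (\<lambda>_. 0)" K] assms
    by (force simp: K_def not_le[symmetric])
  then have "cost (nu_vec m i) \<ge> K / 2 \<or> cost (\<lambda>_. 0) \<ge> K / 2"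
    by linarith
  then obtain h where "h \<in> U_inst m" and "cost h \<ge> K / 2"
    using nu_vec_in_U_inst[OF i] zero_in_U_inst by blast
  moreover have "sqrt m / 4 \<le> K / 2"
    using assms by (simp add: K_def field_simps)
  ultimately have "ereal (sqrt m / 4) \<le> (SUP h\<in>U_inst m. ereal (cost h))"
    by (intro SUP_upper2) auto
  then show "ereal (sqrt m / 4) \<le> ereal (dotp m (\<lambda>_. 0) x) +
      (SUP h\<in>U_inst m. ereal (dotp m (\<lambda>_. 1) (\<lambda>j. mat_vec m P h j + q j)))"
    by (simp add: dotp_def cost_def y_def)
qed

theorem lemma5:
  shows "\<exists>C > 0. \<exists>m0::nat. \<forall>m::nat. m \<ge> m0 \<and> m > 0 \<longrightarrow>
    z_Aff m m (\<lambda>_ _. 0) (B_inst m) (\<lambda>_. 0) (\<lambda>_. 1) (U_inst m)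
      \<ge> ereal (C * sqrt (real m)) * z_AR m m (\<lambda>_ _. 0) (B_inst m) (\<lambda>_. 0) (\<lambda>_. 1) (U_inst m)"
proof (intro exI[of _ "1/4"] conjI exI[of _ 2] allI impI)
  fix m :: nat
  assume "2 \<le> m \<and> 0 < m"
  have "ereal (1/4 * sqrt m) * z_AR m m (\<lambda>_ _. 0) (B_inst m) (\<lambda>_. 0) (\<lambda>_. 1) (U_inst m)
      \<le> ereal (1/4 * sqrt m) * 1"
    by (rule ereal_mult_left_mono[OF z_AR_inst_le_one]) simp
  also have "\<dots> \<le> z_Aff m m (\<lambda>_ _. 0) (B_inst m) (\<lambda>_. 0) (\<lambda>_. 1) (U_inst m)"
    using z_Aff_inst_ge \<open>2 \<le> m \<and> 0 < m\<close> by simp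
  finally show "ereal (1/4 * sqrt m) * z_AR m m (\<lambda>_ _. 0) (B_inst m) (\<lambda>_. 0) (\<lambda>_. 1) (U_inst m)
      \<le> z_Aff m m (\<lambda>_ _. 0) (B_inst m) (\<lambda>_. 0) (\<lambda>_. 1) (U_inst m)" .
qed simp

end
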